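(* Let $M$ be a matroid and let $B_1,\dots,B_s$ be a partial shelling of $\mathcal{I}(M)$ such that the set $\{B_1,\dots,B_s\}$ is an order ideal of $\mathrm{Int}_<(M)$ for some total order $<$ on the ground set of $M$. Then the partial shelling is extendable, i.e. there is an ordering $B'_1,\dots,B'_t$ of the remaining bases of $M$ such that $B_1,\dots,B_s,B'_1,\dots,B'_t$ is a shelling order of $\mathcal{I}(M)$.
   Context: For a matroid $M$ on finite set $E$, $\mathcal{I}(M)$ is its independence complex, whose facets are the bases. A shelling order of a pure simplicial complex is a total order $F_1<\dots<F_k$ of its facets such that for each $j\ge2$, $\langle F_1,\dots,F_{j-1}\rangle\cap\langle F_j\rangle$ is pure of dimension one less than the complex ($\langle\mathcal{G}\rangle$ the complex generated by $\mathcal{G}$). A partial shelling is a sequence of bases $B_1,\dots,B_s$ that is a shelling order of the complex $\langle B_1,\dots,B_s\rangle$. For a total order $<$ on $E$ and a basis $B$, the internally passive set $IP_<(B)$ is the set of $b\in B$ for which there is $b'\notin B$ with $b'<b$ and $(B\setminus\{b\})\cup\{b'\}$ a basis. $\mathrm{Int}_<(M)$ is the poset on the bases of $M$ with $B\preceq B'$ iff $IP_<(B)\subseteq IP_<(B')$. An order ideal of a poset is a downward-closed subset. *)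

theory Defs
  imports Main
begin

definition matroid :: "'a set \<Rightarrow> ('a set \<Rightarrow> bool) \<Rightarrow> bool" where
  "matroid E indep \<longleftrightarrow>
     finite E \<and>
     (\<forall>X. indep X \<longrightarrow> X \<subseteq> E) \<and>
     indep {} \<and>
     (\<forall>X Y. indep Y \<longrightarrow> X \<subseteq> Y \<longrightarrow> indep X) \<and>
     (\<forall>X Y. indep X \<longrightarrow> indep Y \<longrightarrow> card X < card Y \<longrightarrow>
        (\<exists>y \<in> Y - X. indep (insert y X)))"

definition basis :: "('a set \<Rightarrow> bool) \<Rightarrow> 'a set \<Rightarrow> bool" where
  "basis indep B \<longleftrightarrow> indep B \<and> (\<forall>X. indep X \<longrightarrow> B \<subseteq> X \<longrightarrow> X = B)"

definition gen_complex :: "'a set set \<Rightarrow> 'a set set" where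
  "gen_complex G = {S. \<exists>F \<in> G. S \<subseteq> F}"

text \<open>A complex is pure with all facets (maximal faces) of cardinality d,
  i.e. pure of dimension d - 1.\<close>
definition pure_card :: "'a set set \<Rightarrow> nat \<Rightarrow> bool" where
  "pure_card K d \<longleftrightarrow> (\<forall>S \<in> K. (\<forall>T \<in> K. S \<subseteq> T \<longrightarrow> T = S) \<longrightarrow> card S = d)"

text \<open>A partial shelling of the independence complex: a list of distinct bases
  (all of cardinality r = rank, so the generated complex is pure of dimension r-1)
  such that for each j \<ge> 2 the intersection of the complex generated by the
  earlier facets with the complex generated by the j-th facet is pure of
  dimension r - 2, i.e. all its facets have cardinality r - 1.\<close>
definition partial_shelling :: "('a set \<Rightarrow> bool) \<Rightarrow> 'a set list \<Rightarrow> bool" where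
  "partial_shelling indep Bs \<longleftrightarrow>
     distinct Bs \<and> (\<forall>B \<in> set Bs. basis indep B) \<and>
     (\<forall>j. 0 < j \<and> j < length Bs \<longrightarrow>
        pure_card (gen_complex (set (take j Bs)) \<inter> gen_complex {Bs ! j})
                  (card (Bs ! j) - 1))"

definition shelling_order :: "('a set \<Rightarrow> bool) \<Rightarrow> 'a set list \<Rightarrow> bool" where
  "shelling_order indep Bs \<longleftrightarrow>
     partial_shelling indep Bs \<and> set Bs = {B. basis indep B}"

text \<open>Internally passive elements of a basis B w.r.t. a total order R on E
  (R a reflexive linear order; b' < b means (b', b) \<in> R and b' \<noteq> b).\<close>
definition int_passive ::
  "'a set \<Rightarrow> ('a set \<Rightarrow> bool) \<Rightarrow> 'a rel \<Rightarrow> 'a set \<Rightarrow> 'a set" where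
  "int_passive E indep R B =
     {b \<in> B. \<exists>b' \<in> E - B. (b', b) \<in> R \<and> b' \<noteq> b \<and>
                basis indep (insert b' (B - {b}))}"

text \<open>Order ideal of Int_<(M): a set of bases closed downward under
  B' \<preceq> B iff IP(B') \<subseteq> IP(B).\<close>
definition int_order_ideal ::
  "'a set \<Rightarrow> ('a set \<Rightarrow> bool) \<Rightarrow> 'a rel \<Rightarrow> 'a set set \<Rightarrow> bool" where
  "int_order_ideal E indep R S \<longleftrightarrow>
     (\<forall>B \<in> S. basis indep B) \<and>
     (\<forall>B \<in> S. \<forall>B'. basis indep B' \<longrightarrow>
        int_passive E indep R B' \<subseteq> int_passive E indep R B \<longrightarrow> B' \<in> S)"

end

theory Submission
  imports Defs
begin

text \<open>Append the bases outside the order ideal by increasing size of their internally passive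
  sets. When \<open>B\<close> is appended, every facet of the intersection of the earlier complex with
  \<open>\<langle>B\<rangle>\<close> has the form \<open>B - {b}\<close> with \<open>b \<in> IP(B)\<close>. Indeed, exchanging \<open>b \<in> IP(B)\<close> for the least
  admissible smaller element gives a basis \<open>B' \<supseteq> B - {b}\<close> with \<open>IP(B') \<subset> IP(B)\<close>, which comes
  earlier; and no earlier basis \<open>C\<close> contains \<open>IP(B)\<close>, because \<open>IP(B) \<subseteq> C\<close> forces
  \<open>IP(B) \<subseteq> IP(C)\<close>, which either puts \<open>B\<close> into the order ideal or, as \<open>B \<mapsto> IP(B)\<close> is injective,
  gives \<open>C = B\<close>. This monotonicity holds because a passive \<open>b \<in> IP(B)\<close> lies in the closure of
  the elements below \<open>b\<close> together with \<open>IP(B) - {b}\<close>.\<close>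

lemma card_exchange:
  "finite B \<Longrightarrow> b \<in> B \<Longrightarrow> x \<notin> B \<Longrightarrow> card (insert x (B - {b})) = card B"
  by (simp add: card_Diff_singleton) (metis Suc_pred card_gt_0_iff empty_iff)

locale indep_matroid =
  fixes E :: "'a set" and indep :: "'a set \<Rightarrow> bool"
  assumes matroid: "matroid E indep"
begin

lemma finite_E: "finite E"
  using matroid unfolding matroid_def by blast

lemma indep_subset_E: "indep X \<Longrightarrow> X \<subseteq> E"
  using matroid unfolding matroid_def by blast

lemma indep_finite: "indep X \<Longrightarrow> finite X"
  using indep_subset_E finite_E finite_subset by blast

lemma indep_empty: "indep {}"
  using matroid unfolding matroid_def by blast

lemma indep_subset: "indep Y \<Longrightarrow> X \<subseteq> Y \<Longrightarrow> indep X"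
  using matroid unfolding matroid_def by blast

lemma indep_augment:
  "indep X \<Longrightarrow> indep Y \<Longrightarrow> card X < card Y \<Longrightarrow> \<exists>y\<in>Y - X. indep (insert y X)"
  using matroid unfolding matroid_def by blast

lemma basis_indep: "basis indep B \<Longrightarrow> indep B"
  unfolding basis_def by blast

lemma basis_finite: "basis indep B \<Longrightarrow> finite B"
  using basis_indep indep_finite by blast

lemma indep_card_le_basis:
  assumes "indep X" "basis indep B"
  shows "card X \<le> card B"
proof (rule ccontr)
  assume "\<not> card X \<le> card B"
  then obtain y where "y \<in> X - B" "indep (insert y B)"
    using indep_augment basis_indep assms by (meson not_le)
  then show False
    using assms(2) unfolding basis_def by blast
qed

lemma basis_card_eq: "basis indep B \<Longrightarrow> basis indep C \<Longrightarrow> card B = card C"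
  using indep_card_le_basis basis_indep by (simp add: le_antisym)

lemma basis_if_card_eq:
  assumes "indep X" "basis indep B" "card X = card B"
  shows "basis indep X"
  unfolding basis_def
proof (intro conjI allI impI)
  fix Y assume Y: "indep Y" "X \<subseteq> Y"
  then have "card Y \<le> card X"
    using indep_card_le_basis assms by simp
  moreover have "card X \<le> card Y"
    using Y card_mono indep_finite by blast
  ultimately show "Y = X"
    using Y card_subset_eq indep_finite by (metis le_antisym)
qed (fact assms(1))

lemma basis_exchange:
  assumes "basis indep B" "b \<in> B" "x \<notin> B" "indep (insert x (B - {b}))"
  shows "basis indep (insert x (B - {b}))"
  using basis_if_card_eq[OF assms(4,1)] card_exchange[OF basis_finite] assms by blast

text \<open>For independent \<open>J\<close>, \<open>spans J X\<close> means \<open>X \<subseteq> cl(J)\<close>, and \<open>basis_in X J\<close> says that \<open>J\<close>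
  is a basis of the restriction of the matroid to \<open>X\<close>.\<close>

definition spans :: "'a set \<Rightarrow> 'a set \<Rightarrow> bool" where
  "spans J X \<longleftrightarrow> (\<forall>x\<in>X - J. \<not> indep (insert x J))"

definition basis_in :: "'a set \<Rightarrow> 'a set \<Rightarrow> bool" where
  "basis_in X J \<longleftrightarrow> J \<subseteq> X \<and> indep J \<and> spans J X"

lemma spans_superset: "spans J X \<Longrightarrow> J \<subseteq> J' \<Longrightarrow> spans J' X"
  unfolding spans_def using indep_subset by (meson DiffD1 DiffD2 DiffI insert_mono subsetD)

lemma spans_subset: "spans J X \<Longrightarrow> Y \<subseteq> X \<union> J \<Longrightarrow> spans J Y"
  unfolding spans_def by blast

lemma card_le_if_spans:
  assumes "indep J" "spans J X" "I \<subseteq> X" "indep I"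
  shows "card I \<le> card J"
proof (rule ccontr)
  assume "\<not> card I \<le> card J"
  then obtain y where "y \<in> I - J" "indep (insert y J)"
    using indep_augment assms by (meson not_le)
  then show False
    using assms(2,3) unfolding spans_def by blast
qed

lemma basis_in_extend:
  assumes "indep I" "I \<subseteq> X" "X \<subseteq> E"
  obtains J where "I \<subseteq> J" "basis_in X J"
proof -
  define Ext where "Ext = {J. I \<subseteq> J \<and> J \<subseteq> X \<and> indep J}"
  have "Ext \<subseteq> Pow X"
    unfolding Ext_def by blast
  moreover have "finite (Pow X)"
    using finite_subset[OF assms(3) finite_E] by simp
  ultimately have "finite Ext"
    by (rule finite_subset)
  moreover have "Ext \<noteq> {}"
    using assms unfolding Ext_def by blast
  ultimately obtain J where J: "J \<in> Ext" "\<forall>J'\<in>Ext. J \<subseteq> J' \<longrightarrow> J = J'"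
    by (meson finite_has_maximal)
  have "spans J X"
    unfolding spans_def
  proof (intro ballI notI)
    fix y assume y: "y \<in> X - J" "indep (insert y J)"
    then have "insert y J \<in> Ext"
      using J(1) unfolding Ext_def by blast
    then have "J = insert y J"
      using J(2) by (meson subset_insertI)
    then show False
      using y(1) by blast
  qed
  then show thesis
    using that J(1) unfolding Ext_def basis_in_def by blast
qed

lemma basis_in_exists: "X \<subseteq> E \<Longrightarrow> \<exists>J. basis_in X J"
  using basis_in_extend[OF indep_empty empty_subsetI] by metis

lemma basis_if_basis_in:
  assumes "basis_in X D" and B: "basis indep B" "B \<subseteq> X"
  shows "basis indep D"
proof -
  have D: "D \<subseteq> X" "indep D" "spans D X"
    using assms(1) unfolding basis_in_def by auto
  have "card B \<le> card D"
    using card_le_if_spans[OF D(2,3) B(2) basis_indep[OF B(1)]] .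
  moreover have "card D \<le> card B"
    using indep_card_le_basis[OF D(2) B(1)] .
  ultimately show ?thesis
    using basis_if_card_eq[OF D(2) B(1)] by simp
qed

lemma indep_insert_if_spans:
  assumes J: "indep (insert b J)" "b \<notin> J" and G: "indep G" "spans J G"
  shows "indep (insert b G)"
proof -
  have "G \<union> J \<subseteq> E"
    using indep_subset_E[OF G(1)] indep_subset_E[OF J(1)] by blast
  then obtain G' where "G \<subseteq> G'" "basis_in (G \<union> J) G'"
    using basis_in_extend[OF G(1) Un_upper1] by blast
  then have G': "G' \<subseteq> G \<union> J" "indep G'" "spans G' (G \<union> J)"
    unfolding basis_in_def by auto
  have "spans J (G \<union> J)"
    using G(2) unfolding spans_def by blast
  moreover have "indep J"
    using J(1) indep_subset by blast
  ultimately have "card G' \<le> card J"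
    using card_le_if_spans G'(1,2) by blast
  then have "card G' < card (insert b J)"
    using J(2) indep_finite[OF \<open>indep J\<close>] by simp
  then obtain y where y: "y \<in> insert b J - G'" "indep (insert y G')"
    using indep_augment[OF G'(2) J(1)] by blast
  have "y = b"
  proof (rule ccontr)
    assume "y \<noteq> b"
    then have "y \<in> (G \<union> J) - G'"
      using y(1) by blast
    then show False
      using G'(3) y(2) unfolding spans_def by blast
  qed
  then show ?thesis
    using y(2) \<open>G \<subseteq> G'\<close> indep_subset by blast
qed

lemma basis_exchange_into:
  assumes B: "basis indep B" and C: "basis indep C" and a: "a \<in> B - C"
  obtains z where "z \<in> C - B" "basis indep (insert a (C - {z}))"
proof -
  have "indep (insert a (B \<inter> C))"
    by (rule indep_subset[OF basis_indep[OF B]]) (use a in blast)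
  moreover have "insert a (B \<inter> C) \<subseteq> insert a C"
    by blast
  moreover have "insert a C \<subseteq> E"
    using indep_subset_E[OF basis_indep[OF B]] indep_subset_E[OF basis_indep[OF C]] a by blast
  ultimately obtain G where G: "insert a (B \<inter> C) \<subseteq> G" "basis_in (insert a C) G"
    by (rule basis_in_extend)
  have "basis indep G"
    by (rule basis_if_basis_in[OF G(2) C]) blast
  then have "card G = card C"
    using C by (rule basis_card_eq)
  have "\<not> C \<subseteq> G"
  proof
    assume "C \<subseteq> G"
    then have "insert a C \<subseteq> G"
      using G(1) by blast
    then have "card (insert a C) \<le> card G"
      using card_mono basis_finite[OF \<open>basis indep G\<close>] by blast
    then show False
      using \<open>card G = card C\<close> a basis_finite[OF C] by simp
  qed
  then obtain z where z: "z \<in> C" "z \<notin> G"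
    by blast
  have "G \<subseteq> insert a (C - {z})"
    using G(2) z unfolding basis_in_def by blast
  moreover have "card (insert a (C - {z})) = card G"
    using card_exchange[OF basis_finite[OF C] z(1)] a \<open>card G = card C\<close> by simp
  ultimately have "G = insert a (C - {z})"
    using card_subset_eq[of "insert a (C - {z})" G] basis_finite[OF C] by simp
  moreover have "z \<notin> B"
    using z G(1) by blast
  ultimately show thesis
    using that z(1) \<open>basis indep G\<close> by blast
qed

end

locale ordered_matroid = indep_matroid +
  fixes R :: "'a rel"
  assumes linear: "linear_order_on E R"
begin

abbreviation lt :: "'a \<Rightarrow> 'a \<Rightarrow> bool" where
  "lt x y \<equiv> (x, y) \<in> R \<and> x \<noteq> y"

abbreviation below :: "'a \<Rightarrow> 'a set" where
  "below b \<equiv> {x \<in> E. lt x b}"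

abbreviation IP :: "'a set \<Rightarrow> 'a set" where
  "IP \<equiv> int_passive E indep R"

lemma lt_trans: "lt x y \<Longrightarrow> lt y z \<Longrightarrow> lt x z"
  using linear unfolding linear_order_on_def partial_order_on_def preorder_on_def antisym_def trans_def
  by blast

lemma lt_asym: "lt x y \<Longrightarrow> \<not> lt y x"
  using linear unfolding linear_order_on_def partial_order_on_def antisym_def by blast

lemma lt_total: "x \<in> E \<Longrightarrow> y \<in> E \<Longrightarrow> x \<noteq> y \<Longrightarrow> lt x y \<or> lt y x"
  using linear unfolding linear_order_on_def total_on_def by blast

lemma exists_lt_minimal:
  assumes "finite A" "A \<noteq> {}"
  obtains m where "m \<in> A" "\<forall>x\<in>A. \<not> lt x m"
proof -
  have "asymp_on A lt"
    by (rule asymp_onI) (rule lt_asym)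
  moreover have "transp_on A lt"
    by (rule transp_onI) (rule lt_trans)
  ultimately have "\<exists>m\<in>A. \<forall>x\<in>A. x \<noteq> m \<longrightarrow> \<not> lt x m"
    by (rule Finite_Set.bex_min_element[OF assms(1) _ _ assms(2)])
  then show thesis
    using that by blast
qed

lemma IP_subset: "IP B \<subseteq> B"
  unfolding int_passive_def by blast

lemma int_passiveI:
  "b \<in> B \<Longrightarrow> e \<in> E - B \<Longrightarrow> lt e b \<Longrightarrow> basis indep (insert e (B - {b})) \<Longrightarrow> b \<in> IP B"
  unfolding int_passive_def by blast

lemma int_passiveE:
  assumes "b \<in> IP B"
  obtains e where "e \<in> E - B" "lt e b" "basis indep (insert e (B - {b}))"
  using assms unfolding int_passive_def by blast

lemma not_passive_spans_below:
  assumes C: "basis indep C" and b: "b \<in> C" "b \<notin> IP C"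
  shows "spans (C - {b}) (below b)"
  unfolding spans_def
proof (intro ballI notI)
  fix x assume "x \<in> below b - (C - {b})" and indep: "indep (insert x (C - {b}))"
  then have x: "x \<in> E - C" "lt x b"
    by auto
  moreover have "basis indep (insert x (C - {b}))"
    using basis_exchange[OF C b(1) _ indep] x(1) by blast
  ultimately have "b \<in> IP C"
    by (rule int_passiveI[OF b(1)])
  then show False
    using b(2) by blast
qed

lemma mem_basis_if_not_passive:
  assumes B: "basis indep B" and D: "basis indep D" "D \<subseteq> below b \<union> B"
    and x: "x \<in> B" "x \<notin> IP B" "lt b x"
  shows "x \<in> D"
proof (rule ccontr)
  assume "x \<notin> D"
  have "indep (B - {x})"
    by (rule indep_subset[OF basis_indep[OF B]]) blast
  moreover have "card (B - {x}) < card D"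
    using card_Diff1_less[OF basis_finite[OF B] x(1)] basis_card_eq[OF B D(1)] by simp
  ultimately obtain d where d: "d \<in> D - (B - {x})" "indep (insert d (B - {x}))"
    using indep_augment[OF _ basis_indep[OF D(1)]] by blast
  then have "d \<in> E - B" "lt d b"
    using \<open>x \<notin> D\<close> D(2) by auto
  moreover have "lt d x"
    using lt_trans \<open>lt d b\<close> x(3) .
  moreover have "basis indep (insert d (B - {x}))"
    using basis_exchange[OF B x(1) _ d(2)] \<open>d \<in> E - B\<close> by blast
  ultimately have "x \<in> IP B"
    using int_passiveI[OF x(1)] by blast
  then show False
    using x(2) by blast
qed

text \<open>That is, \<open>b \<in> cl(below b \<union> (IP B - {b}))\<close>. Otherwise, extending \<open>insert b G\<close> to a basis \<open>D\<close>
  of \<open>below b \<union> B\<close>, the set \<open>D - {b}\<close> would span \<open>below b \<union> (B - {b})\<close>, since the active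
  elements of \<open>B\<close> above \<open>b\<close> are forced into \<open>D\<close>; but that set contains the basis witnessing
  that \<open>b\<close> is passive.\<close>
lemma passive_not_indep_insert:
  assumes B: "basis indep B" and b: "b \<in> IP B"
    and G: "basis_in (below b \<union> (IP B - {b})) G"
  shows "\<not> indep (insert b G)"
proof
  assume "indep (insert b G)"
  let ?X = "below b \<union> (IP B - {b})"
  have "b \<in> B"
    using b IP_subset by blast
  have "G \<subseteq> ?X" "spans G ?X"
    using G unfolding basis_in_def by auto
  have "insert b G \<subseteq> below b \<union> B"
    using \<open>G \<subseteq> ?X\<close> \<open>b \<in> B\<close> IP_subset by blast
  moreover have "below b \<union> B \<subseteq> E"
    using indep_subset_E[OF basis_indep[OF B]] by blast
  ultimately obtain D where D: "insert b G \<subseteq> D" "basis_in (below b \<union> B) D"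
    by (rule basis_in_extend[OF \<open>indep (insert b G)\<close>])
  have "basis indep D"
    by (rule basis_if_basis_in[OF D(2) B]) blast
  have "D \<subseteq> below b \<union> B"
    using D(2) unfolding basis_in_def by blast
  have cover: "below b \<union> (B - {b}) \<subseteq> ?X \<union> (D - {b})"
  proof
    fix x assume x: "x \<in> below b \<union> (B - {b})"
    show "x \<in> ?X \<union> (D - {b})"
    proof (cases "x \<in> ?X")
      case False
      then have "x \<in> B" "x \<notin> IP B" "x \<noteq> b" "x \<notin> below b"
        using x by auto
      moreover have "x \<in> E" "b \<in> E"
        using indep_subset_E[OF basis_indep[OF B]] \<open>x \<in> B\<close> \<open>b \<in> B\<close> by auto
      ultimately have "lt b x"
        using lt_total[of b x] by auto
      with \<open>x \<in> B\<close> \<open>x \<notin> IP B\<close> have "x \<in> D"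
        by (intro mem_basis_if_not_passive[OF B \<open>basis indep D\<close> \<open>D \<subseteq> below b \<union> B\<close>])
      then show ?thesis
        using \<open>x \<noteq> b\<close> by blast
    qed blast
  qed
  have "spans (D - {b}) ?X"
    by (rule spans_superset[OF \<open>spans G ?X\<close>]) (use D(1) \<open>G \<subseteq> ?X\<close> in blast)
  then have spans_D: "spans (D - {b}) (below b \<union> (B - {b}))"
    using cover by (rule spans_subset)
  obtain e where e: "e \<in> E - B" "lt e b" "basis indep (insert e (B - {b}))"
    using int_passiveE[OF b] by blast
  have "indep (D - {b})"
    by (rule indep_subset[OF basis_indep[OF \<open>basis indep D\<close>]]) blast
  moreover have "insert e (B - {b}) \<subseteq> below b \<union> (B - {b})"
    using e by blast
  ultimately have "card (insert e (B - {b})) \<le> card (D - {b})"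
    using card_le_if_spans[OF _ spans_D _ basis_indep[OF e(3)]] by blast
  moreover have "card (insert e (B - {b})) = card B"
    using card_exchange[OF basis_finite[OF B] \<open>b \<in> B\<close>] e(1) by blast
  moreover have "card (D - {b}) < card D"
    using card_Diff1_less[OF basis_finite[OF \<open>basis indep D\<close>]] D(1) by blast
  ultimately show False
    using basis_card_eq[OF B \<open>basis indep D\<close>] by linarith
qed

lemma IP_mono:
  assumes B: "basis indep B" and C: "basis indep C" and sub: "IP B \<subseteq> C"
  shows "IP B \<subseteq> IP C"
proof
  fix b assume b: "b \<in> IP B"
  show "b \<in> IP C"
  proof (rule ccontr)
    assume "b \<notin> IP C"
    let ?X = "below b \<union> (IP B - {b})"
    have "?X \<subseteq> E"
      using indep_subset_E[OF basis_indep[OF B]] IP_subset by blast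
    then obtain G where G: "basis_in ?X G"
      using basis_in_exists by blast
    have "b \<in> C"
      using b sub by blast
    have "spans (C - {b}) (below b)"
      by (rule not_passive_spans_below[OF C \<open>b \<in> C\<close> \<open>b \<notin> IP C\<close>])
    then have "spans (C - {b}) ?X"
      by (rule spans_subset) (use sub in blast)
    then have "spans (C - {b}) G"
      by (rule spans_subset) (use G in \<open>auto simp: basis_in_def\<close>)
    moreover have "indep (insert b (C - {b}))"
      using basis_indep[OF C] \<open>b \<in> C\<close> by (simp add: insert_absorb)
    moreover have "indep G"
      using G unfolding basis_in_def by blast
    ultimately have "indep (insert b G)"
      using indep_insert_if_spans by blast
    then show False
      using passive_not_indep_insert[OF B b G] by blast
  qed
qed

lemma IP_exchange:
  assumes B: "basis indep B" and b: "b \<in> IP B"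
  obtains B' where "basis indep B'" "B - {b} \<subseteq> B'" "IP B' \<subset> IP B"
proof -
  define Z where "Z = {e \<in> E - B. lt e b \<and> basis indep (insert e (B - {b}))}"
  have "finite Z"
    unfolding Z_def using finite_E by simp
  moreover have "Z \<noteq> {}"
    using int_passiveE[OF b] unfolding Z_def by blast
  ultimately obtain e where e: "e \<in> Z" and e_min: "\<forall>x\<in>Z. \<not> lt x e"
    by (rule exists_lt_minimal)
  define B' where "B' = insert e (B - {b})"
  \<comment> \<open>the minimality of \<open>e\<close> makes \<open>e\<close> internally active in \<open>B'\<close>\<close>
  have "b \<in> B" "e \<notin> B" "lt e b" "basis indep B'"
    using b IP_subset e unfolding Z_def B'_def by auto
  have "IP B' \<subseteq> B"
  proof
    fix y assume y: "y \<in> IP B'"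
    show "y \<in> B"
    proof (rule ccontr)
      assume "y \<notin> B"
      then have "y = e"
        using y IP_subset[of B'] unfolding B'_def by blast
      then obtain x where x: "x \<in> E - B'" "lt x e" "basis indep (insert x (B' - {e}))"
        using int_passiveE y by blast
      have "B' - {e} = B - {b}"
        using \<open>e \<notin> B\<close> \<open>lt e b\<close> unfolding B'_def by blast
      moreover have "x \<noteq> b"
        using x(2) \<open>lt e b\<close> lt_asym by blast
      moreover have "lt x b"
        using x(2) \<open>lt e b\<close> by (rule lt_trans)
      ultimately have "x \<in> Z"
        using x unfolding Z_def B'_def by auto
      then show False
        using e_min x(2) by blast
    qed
  qed
  then have "IP B' \<subseteq> IP B"
    by (rule IP_mono[OF \<open>basis indep B'\<close> B])
  moreover have "b \<notin> B'"
    using \<open>lt e b\<close> unfolding B'_def by blast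
  ultimately have "IP B' \<subset> IP B"
    using b IP_subset[of B'] by blast
  moreover have "B - {b} \<subseteq> B'"
    unfolding B'_def by blast
  ultimately show thesis
    using that \<open>basis indep B'\<close> by blast
qed

lemma IP_not_subset_if_min_diff:
  assumes B: "basis indep B" and C: "basis indep C" and a: "a \<in> B - C"
    and a_min: "\<forall>z\<in>C - B. \<not> lt z a"
  shows "\<not> IP C \<subseteq> B"
proof -
  obtain z where z: "z \<in> C - B" "basis indep (insert a (C - {z}))"
    using basis_exchange_into[OF B C a] by blast
  have "a \<in> E - C" "z \<in> E"
    using a z(1) indep_subset_E[OF basis_indep[OF B]] indep_subset_E[OF basis_indep[OF C]] by auto
  moreover have "a \<noteq> z"
    using a z(1) by blast
  ultimately have "lt a z"
    using lt_total[of a z] a_min z(1) by blast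
  with z \<open>a \<in> E - C\<close> have "z \<in> IP C"
    by (intro int_passiveI[of z C a]) auto
  then show ?thesis
    using z(1) by blast
qed

lemma IP_inj:
  assumes B: "basis indep B" and C: "basis indep C" and eq: "IP B = IP C"
  shows "B = C"
proof (rule ccontr)
  assume "B \<noteq> C"
  define D where "D = (B - C) \<union> (C - B)"
  have "finite D"
    unfolding D_def using basis_finite B C by blast
  moreover have "D \<noteq> {}"
    unfolding D_def using \<open>B \<noteq> C\<close> by blast
  ultimately obtain a where "a \<in> D" "\<forall>x\<in>D. \<not> lt x a"
    by (rule exists_lt_minimal)
  then consider "a \<in> B - C" "\<forall>x\<in>C - B. \<not> lt x a" | "a \<in> C - B" "\<forall>x\<in>B - C. \<not> lt x a"
    unfolding D_def by blast
  then show False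
  proof cases
    case 1
    then have "\<not> IP C \<subseteq> B"
      by (rule IP_not_subset_if_min_diff[OF B C])
    then show False
      using eq IP_subset[of B] by blast
  next
    case 2
    then have "\<not> IP B \<subseteq> C"
      by (rule IP_not_subset_if_min_diff[OF C B])
    then show False
      using eq IP_subset[of C] by blast
  qed
qed

end

text \<open>\<open>P\<close> plays the role of the restriction of \<open>B\<close> in the shelling.\<close>
lemma pure_card_if_restriction:
  assumes "finite B" "P \<subseteq> B"
    and not_covered: "\<forall>C\<in>F. \<not> P \<subseteq> C"
    and facets: "\<forall>b\<in>P. \<exists>C\<in>F. B - {b} \<subseteq> C"
  shows "pure_card (gen_complex F \<inter> gen_complex {B}) (card B - 1)"
  unfolding pure_card_def
proof (intro ballI impI)
  fix S assume S: "S \<in> gen_complex F \<inter> gen_complex {B}"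
    and maximal: "\<forall>T\<in>gen_complex F \<inter> gen_complex {B}. S \<subseteq> T \<longrightarrow> T = S"
  obtain C where "C \<in> F" "S \<subseteq> C" "S \<subseteq> B"
    using S unfolding gen_complex_def by blast
  then obtain b where "b \<in> P" "b \<notin> C"
    using not_covered by blast
  have "B - {b} \<in> gen_complex F \<inter> gen_complex {B}"
    using facets \<open>b \<in> P\<close> unfolding gen_complex_def by blast
  moreover have "S \<subseteq> B - {b}"
    using \<open>S \<subseteq> B\<close> \<open>S \<subseteq> C\<close> \<open>b \<notin> C\<close> by blast
  ultimately have "S = B - {b}"
    using maximal by blast
  moreover have "b \<in> B"
    using assms(2) \<open>b \<in> P\<close> by blast
  ultimately show "card S = card B - 1"
    by simp
qed

lemma partial_shelling_append:
  assumes Bs: "partial_shelling indep Bs"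
    and distinct: "distinct (Bs @ Bs')" and bases: "\<forall>B\<in>set Bs'. basis indep B"
    and steps: "\<forall>k<length Bs'. pure_card (gen_complex (set Bs \<union> set (take k Bs')) \<inter> gen_complex {Bs' ! k})
                                      (card (Bs' ! k) - 1)"
  shows "partial_shelling indep (Bs @ Bs')"
  unfolding partial_shelling_def
proof (intro conjI allI impI)
  show "distinct (Bs @ Bs')"
    by (fact distinct)
  show "\<forall>B\<in>set (Bs @ Bs'). basis indep B"
    using Bs bases unfolding partial_shelling_def by auto
  fix j assume j: "0 < j \<and> j < length (Bs @ Bs')"
  show "pure_card (gen_complex (set (take j (Bs @ Bs'))) \<inter> gen_complex {(Bs @ Bs') ! j})
          (card ((Bs @ Bs') ! j) - 1)"
  proof (cases "j < length Bs")
    case True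
    then show ?thesis
      using Bs j unfolding partial_shelling_def by (simp add: nth_append)
  next
    case False
    with j have "j - length Bs < length Bs'"
      by (simp add: less_diff_conv2)
    from steps[rule_format, OF this] False show ?thesis
      by (simp add: nth_append)
  qed
qed

lemma sorted_key_take_le:
  assumes "sorted (map f xs)" "k < length xs" "x \<in> set (take k xs)"
  shows "f x \<le> f (xs ! k)"
proof -
  obtain i where "i < k" "x = xs ! i"
    using assms(2,3) by (auto simp: in_set_conv_nth)
  then show ?thesis
    using sorted_nth_mono[OF assms(1), of i k] assms(2) by simp
qed

lemma mem_take_if_key_less:
  assumes "sorted (map f xs)" "k < length xs" "x \<in> set xs" "f x < f (xs ! k)"
  shows "x \<in> set (take k xs)"
proof -
  obtain i where i: "i < length xs" "x = xs ! i"
    using assms(3) by (auto simp: in_set_conv_nth)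
  have "i < k"
  proof (rule ccontr)
    assume "\<not> i < k"
    then have "f (xs ! k) \<le> f x"
      using sorted_nth_mono[OF assms(1), of k i] i by simp
    then show False
      using assms(4) by simp
  qed
  with i have "take k xs ! i = x" "i < length (take k xs)"
    by auto
  then show ?thesis
    by (metis nth_mem)
qed

context ordered_matroid
begin

lemma shelling_step:
  assumes ideal: "int_order_ideal E indep R I"
    and B: "basis indep B" "B \<notin> I"
    and earlier: "\<forall>C\<in>A. basis indep C \<and> C \<noteq> B \<and> card (IP C) \<le> card (IP B)"
    and smaller: "\<forall>C. basis indep C \<and> card (IP C) < card (IP B) \<longrightarrow> C \<in> I \<union> A"
  shows "pure_card (gen_complex (I \<union> A) \<inter> gen_complex {B}) (card B - 1)"
proof (rule pure_card_if_restriction[OF basis_finite[OF B(1)] IP_subset])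
  have finite_IP: "finite (IP B)"
    using basis_finite[OF B(1)] IP_subset finite_subset by blast
  show "\<forall>C\<in>I \<union> A. \<not> IP B \<subseteq> C"
  proof (intro ballI notI)
    fix C assume C: "C \<in> I \<union> A" and "IP B \<subseteq> C"
    have "basis indep C"
      using C ideal earlier unfolding int_order_ideal_def by blast
    then have sub: "IP B \<subseteq> IP C"
      using IP_mono B(1) \<open>IP B \<subseteq> C\<close> by blast
    show False
    proof (cases "C \<in> I")
      case True
      then show False
        using ideal B sub unfolding int_order_ideal_def by blast
    next
      case False
      then have "C \<in> A"
        using C by blast
      have "finite (IP C)"
        using finite_subset[OF IP_subset basis_finite[OF \<open>basis indep C\<close>]] .
      moreover have "card (IP C) \<le> card (IP B)"
        using earlier \<open>C \<in> A\<close> by blast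
      ultimately have "card (IP B) = card (IP C)"
        using card_mono[OF \<open>finite (IP C)\<close> sub] by linarith
      then have "IP B = IP C"
        using card_subset_eq[OF \<open>finite (IP C)\<close> sub] by blast
      then show False
        using IP_inj[OF B(1) \<open>basis indep C\<close>] earlier \<open>C \<in> A\<close> by blast
    qed
  qed
  show "\<forall>b\<in>IP B. \<exists>C\<in>I \<union> A. B - {b} \<subseteq> C"
  proof
    fix b assume "b \<in> IP B"
    then obtain B' where B': "basis indep B'" "B - {b} \<subseteq> B'" "IP B' \<subset> IP B"
      by (rule IP_exchange[OF B(1)])
    then have "card (IP B') < card (IP B)"
      using finite_IP psubset_card_mono by blast
    then show "\<exists>C\<in>I \<union> A. B - {b} \<subseteq> C"
      using smaller B' by blast
  qed
qed

lemma order_ideal_shelling_extends: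
  assumes Bs: "partial_shelling indep Bs" and ideal: "int_order_ideal E indep R (set Bs)"
  shows "\<exists>Bs'. set Bs' = {B. basis indep B} - set Bs \<and> distinct Bs' \<and>
               shelling_order indep (Bs @ Bs')"
proof -
  define T where "T = {B. basis indep B} - set Bs"
  have "T \<subseteq> Pow E"
    unfolding T_def using basis_indep indep_subset_E by blast
  then have "finite T"
    using finite_E by (simp add: finite_subset)
  then obtain xs where xs: "set xs = T" "distinct xs"
    using finite_distinct_list by blast
  define Bs' where "Bs' = sort_key (\<lambda>B. card (IP B)) xs"
  have Bs': "set Bs' = T" "distinct Bs'" "sorted (map (\<lambda>B. card (IP B)) Bs')"
    unfolding Bs'_def using xs by auto
  have steps: "pure_card (gen_complex (set Bs \<union> set (take k Bs')) \<inter> gen_complex {Bs' ! k})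
          (card (Bs' ! k) - 1)" if k: "k < length Bs'" for k
  proof (rule shelling_step[OF ideal])
    show "basis indep (Bs' ! k)" "Bs' ! k \<notin> set Bs"
      using nth_mem[OF k] Bs'(1) unfolding T_def by auto
    have "Bs' ! k \<notin> set (take k Bs')"
      using Bs'(2) by (subst (asm) id_take_nth_drop[OF k]) simp
    then show "\<forall>C\<in>set (take k Bs'). basis indep C \<and> C \<noteq> Bs' ! k \<and> card (IP C) \<le> card (IP (Bs' ! k))"
      using Bs'(1) sorted_key_take_le[OF Bs'(3) k] set_take_subset[of k Bs'] unfolding T_def by blast
    show "\<forall>C. basis indep C \<and> card (IP C) < card (IP (Bs' ! k)) \<longrightarrow> C \<in> set Bs \<union> set (take k Bs')"
      using mem_take_if_key_less[OF Bs'(3) k] Bs'(1) unfolding T_def by blast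
  qed
  have "distinct (Bs @ Bs')"
    using Bs Bs'(1,2) unfolding partial_shelling_def T_def by auto
  moreover have "\<forall>B\<in>set Bs'. basis indep B"
    using Bs'(1) unfolding T_def by blast
  ultimately have "partial_shelling indep (Bs @ Bs')"
    using partial_shelling_append[OF Bs] steps by blast
  moreover have "set (Bs @ Bs') = {B. basis indep B}"
    using Bs Bs'(1) unfolding T_def partial_shelling_def by auto
  ultimately show ?thesis
    using Bs' unfolding T_def shelling_order_def by blast
qed

end

theorem corollary5p3:
  fixes E :: "'a set" and indep :: "'a set \<Rightarrow> bool" and Bs :: "'a set list"
  assumes "matroid E indep"
    and "Bs \<noteq> []"
    and "partial_shelling indep Bs"
    and "\<exists>R. linear_order_on E R \<and> int_order_ideal E indep R (set Bs)"
  shows "\<exists>Bs'. set Bs' = {B. basis indep B} - set Bs \<and> distinct Bs' \<and>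
               shelling_order indep (Bs @ Bs')"
proof -
  obtain R where "linear_order_on E R" "int_order_ideal E indep R (set Bs)"
    using assms(4) by blast
  then interpret ordered_matroid E indep R
    using assms(1) by unfold_locales
  show ?thesis
    using order_ideal_shelling_extends[OF assms(3)] \<open>int_order_ideal E indep R (set Bs)\<close> .
qed

end
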